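(* Let $q\in\mathbb{C}$ with $0<|q|\le 1$ and $A\in M_n$. (a) If $A\in\Pi^n_{s,\alpha}$ for some $\alpha\in[0,\pi/2)$, then $|q|\cos(\alpha)\,\|A\|\le w_q(A)\le \|A\|$. (b) If either $A,A^2\in\Pi^n_{s,\alpha}$ for some $\alpha\in[0,\pi/2)$, or $A$ is accretive-dissipative, then $\frac{|q|}{\sqrt2}\|A\|\le w_q(A)\le\|A\|$.
   Context: $M_n$ is the algebra of complex $n\times n$ matrices with the operator (spectral) norm $\|\cdot\|$. For $|q|\le1$, $W_q(A)=\{\langle Ax,y\rangle: x,y\in\mathbb{C}^n,\ \|x\|=\|y\|=1,\ \langle x,y\rangle=q\}$ and $w_q(A)=\sup\{|z|:z\in W_q(A)\}$. The numerical range is $W(A)=\{\langle Ax,x\rangle:\|x\|=1\}$. For $\alpha\in[0,\pi/2)$, $S_\alpha=\{z\in\mathbb{C}:\operatorname{Re}z>0,\ |\operatorname{Im}z|\le\tan(\alpha)\operatorname{Re}z\}$ and $\Pi^n_{s,\alpha}=\{A\in M_n: W(A)\subseteq S_\alpha\}$ (sectorial matrices). With $\mathcal{R}(A)=\frac{A+A^*}{2}$, $\mathcal{I}(A)=\frac{A-A^*}{2i}$, $A$ is accretive-dissipative if $\mathcal{R}(A)>0$ and $\mathcal{I}(A)>0$ (positive definite). *)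

theory Defs
  imports "HOL-Analysis.Analysis"
begin

text \<open>Matrices in M_n are rendered as complex ^'n ^'n, vectors as complex ^'n
  (Euclidean norm = norm on vec).\<close>

definition cinner :: "complex ^'n \<Rightarrow> complex ^'n \<Rightarrow> complex" where
  "cinner x y = (\<Sum>i\<in>UNIV. x $ i * cnj (y $ i))"

definition adjoint_mat :: "complex ^'n ^'n \<Rightarrow> complex ^'n ^'n" where
  "adjoint_mat A = (\<chi> i j. cnj (A $ j $ i))"

definition op_norm :: "complex ^'n ^'n \<Rightarrow> real" where
  "op_norm A = onorm (\<lambda>x. A *v x)"

definition q_num_range :: "complex \<Rightarrow> complex ^'n ^'n \<Rightarrow> complex set" where
  "q_num_range q A = {cinner (A *v x) y | x y. norm x = 1 \<and> norm y = 1 \<and> cinner x y = q}"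

definition q_num_radius :: "complex \<Rightarrow> complex ^'n ^'n \<Rightarrow> real" where
  "q_num_radius q A = Sup (cmod ` q_num_range q A)"

definition num_range :: "complex ^'n ^'n \<Rightarrow> complex set" where
  "num_range A = {cinner (A *v x) x | x. norm x = 1}"

definition sector :: "real \<Rightarrow> complex set" where
  "sector \<alpha> = {z. Re z > 0 \<and> \<bar>Im z\<bar> \<le> tan \<alpha> * Re z}"

definition sectorial :: "real \<Rightarrow> complex ^'n ^'n \<Rightarrow> bool" where
  "sectorial \<alpha> A \<longleftrightarrow> num_range A \<subseteq> sector \<alpha>"

definition real_part_mat :: "complex ^'n ^'n \<Rightarrow> complex ^'n ^'n" where
  "real_part_mat A = (\<chi> i j. (A $ i $ j + adjoint_mat A $ i $ j) / 2)"

definition imag_part_mat :: "complex ^'n ^'n \<Rightarrow> complex ^'n ^'n" where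
  "imag_part_mat A = (\<chi> i j. (A $ i $ j - adjoint_mat A $ i $ j) / (2 * \<i>))"

definition pos_def :: "complex ^'n ^'n \<Rightarrow> bool" where
  "pos_def H \<longleftrightarrow> adjoint_mat H = H \<and> (\<forall>x. x \<noteq> 0 \<longrightarrow> Re (cinner (H *v x) x) > 0)"

definition accretive_dissipative :: "complex ^'n ^'n \<Rightarrow> bool" where
  "accretive_dissipative A \<longleftrightarrow> pos_def (real_part_mat A) \<and> pos_def (imag_part_mat A)"

end

(* If the numerical range W(A) lies in two closed half-planes Re (u_k z) >= 0, Cauchy-Schwarz for
   the positive semidefinite Hermitian matrices u_k A + cnj u_k A^* bounds two combinations of
   <Ax, y> and <Ay, x>; eliminating <Ay, x> gives c |<Ax, y>| <= sqrt (|<Ax, x>| |<Ay, y>|).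
   The half-planes bounding the sector S_alpha give c = cos alpha (for alpha = 0 the form is
   Hermitian and c = 1), those bounding the first quadrant give c = 1 / sqrt 2, and if A and A^2
   are sectorial then W(A) lies in the quarter sector |Im z| <= Re z, which again gives
   c = 1 / sqrt 2.
   For a unit vector v there are unit vectors y1, y2 with <v, y_k> = q and y1 + y2 = 2 cnj q v
   (built from a unit vector orthogonal to v when |q| < 1), so |q| |<Av, v>| <= w_q(A). As ||A||
   is the maximum of |<Ax, y>| over unit x, y, this yields |q| c ||A|| <= w_q(A); the upper bound
   w_q(A) <= ||A|| is Cauchy-Schwarz. *)

theory Submission
  imports Defs
begin

section \<open>Inner product, adjoint and sesquilinear forms\<close>

lemma mult_cnj_cmod_sq: "c * cnj c = (complex_of_real (cmod c))\<^sup>2"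
  and cnj_mult_cmod_sq: "cnj c * c = (complex_of_real (cmod c))\<^sup>2"
  by (metis complex_norm_square of_real_power mult.commute)+

lemma cinner_add_left: "cinner (x + y) z = cinner x z + cinner y z"
  by (simp add: cinner_def sum.distrib distrib_right)

lemma cinner_add_right: "cinner x (y + z) = cinner x y + cinner x z"
  by (simp add: cinner_def sum.distrib distrib_left)

lemma cinner_diff_left: "cinner (x - y) z = cinner x z - cinner y z"
  by (simp add: cinner_def sum_subtractf left_diff_distrib)

lemma cinner_diff_right: "cinner x (y - z) = cinner x y - cinner x z"
  by (simp add: cinner_def sum_subtractf right_diff_distrib)

lemma cinner_scale_left: "cinner (c *s x) y = c * cinner x y"
  by (simp add: cinner_def sum_distrib_left mult.assoc)

lemma cinner_scale_right: "cinner x (c *s y) = cnj c * cinner x y"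
  by (simp add: cinner_def sum_distrib_left algebra_simps)

lemma cinner_commute: "cinner y x = cnj (cinner x y)"
  by (simp add: cinner_def mult.commute)

lemma cinner_zero_left [simp]: "cinner 0 y = 0"
  and cinner_zero_right [simp]: "cinner x 0 = 0"
  by (simp_all add: cinner_def)

lemma cinner_self: "cinner x x = complex_of_real ((norm x)\<^sup>2)"
proof -
  have "cinner x x = (\<Sum>i\<in>UNIV. complex_of_real ((cmod (x $ i))\<^sup>2))"
    unfolding cinner_def by (intro sum.cong refl) (metis complex_norm_square)
  also have "\<dots> = complex_of_real ((norm x)\<^sup>2)"
    by (simp add: norm_vec_def L2_set_def sum_nonneg)
  finally show ?thesis .
qed

lemma cinner_self_eq_0_iff: "cinner x x = 0 \<longleftrightarrow> x = 0"
  by (simp add: cinner_self)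

lemma norm_eq_1_iff_cinner_self: "norm x = 1 \<longleftrightarrow> cinner x x = 1"
  by (simp add: cinner_self abs_square_eq_1 del: of_real_power)

lemma norm_vector_scalar_mult: "norm (c *s (x :: complex^'n)) = cmod c * norm x"
proof -
  have "(norm (c *s x))\<^sup>2 = (cmod c * norm x)\<^sup>2"
    by (simp add: norm_vec_def L2_set_def sum_nonneg power_mult_distrib norm_mult sum_distrib_left)
  thus ?thesis by (simp add: power2_eq_iff_nonneg)
qed

lemma norm_normalize: "x \<noteq> 0 \<Longrightarrow> norm (complex_of_real (1 / norm x) *s x) = 1"
  by (simp add: norm_vector_scalar_mult norm_divide)

lemma norm_axis_complex_1 [simp]: "norm (axis i (1::complex)) = 1"
  by (simp add: inner_axis' norm_eq_1)

lemma cinner_axis: "cinner v (axis k 1) = v $ k"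
proof -
  have "cinner v (axis k 1) = (\<Sum>i\<in>UNIV. if i = k then v $ i else 0)"
    unfolding cinner_def axis_def by (intro sum.cong) auto
  thus ?thesis by simp
qed

lemma adjoint_mat_adjoint_mat [simp]: "adjoint_mat (adjoint_mat A) = A"
  by (simp add: adjoint_mat_def vec_eq_iff)

lemma cinner_adjoint_mat: "cinner (A *v x) y = cinner x (adjoint_mat A *v y)"
proof -
  have "cinner (A *v x) y = (\<Sum>i\<in>UNIV. \<Sum>j\<in>UNIV. A $ i $ j * x $ j * cnj (y $ i))"
    unfolding cinner_def matrix_vector_mult_def by (simp add: sum_distrib_right)
  also have "\<dots> = (\<Sum>j\<in>UNIV. \<Sum>i\<in>UNIV. A $ i $ j * x $ j * cnj (y $ i))"
    by (rule sum.swap)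
  also have "\<dots> = cinner x (adjoint_mat A *v y)"
    unfolding cinner_def matrix_vector_mult_def adjoint_mat_def
    by (simp add: sum_distrib_left mult_ac)
  finally show ?thesis .
qed

lemma mat_matrix_vector_mult: "mat c *v x = c *s (x :: 'a::semiring_1^'n)"
  by (simp add: vec_eq_iff matrix_vector_mult_def mat_def if_distrib[of "\<lambda>a. a * _"]
      if_distrib[of "\<lambda>a. _ * a"] cong: if_cong)

abbreviation form :: "complex^'n^'n \<Rightarrow> complex^'n \<Rightarrow> complex^'n \<Rightarrow> complex" where
  "form A x y \<equiv> cinner (A *v x) y"

lemma form_add_scale_self:
  "form A (x + t *s y) (x + t *s y)
     = form A x x + cnj t * form A x y + t * form A y x + complex_of_real ((cmod t)\<^sup>2) * form A y y"
  by (simp add: matrix_vector_right_distrib vec.scale cinner_add_left cinner_add_right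
      cinner_scale_left cinner_scale_right mult_cnj_cmod_sq cnj_mult_cmod_sq algebra_simps)

lemma form_scale_self: "form A (c *s x) (c *s x) = complex_of_real ((cmod c)\<^sup>2) * form A x x"
  by (simp add: vec.scale cinner_scale_left cinner_scale_right mult_cnj_cmod_sq cnj_mult_cmod_sq algebra_simps)

lemma form_adjoint_mat_self: "form (adjoint_mat A) x x = cnj (form A x x)"
  by (metis cinner_adjoint_mat adjoint_mat_adjoint_mat cinner_commute)

section \<open>Cauchy-Schwarz for forms with numerical range in a half-plane\<close>

lemma cmod_sq_le_of_quadratic_nonneg:
  fixes a b :: real and c :: complex
  assumes nonneg: "\<And>t. 0 \<le> a + 2 * Re (cnj t * c) + (cmod t)\<^sup>2 * b" and "0 \<le> b"
  shows "(cmod c)\<^sup>2 \<le> a * b"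
proof (cases "b = 0")
  case True
  show ?thesis
  proof (rule ccontr)
    assume "\<not> ?thesis"
    hence "c \<noteq> 0" using True by auto
    define r where "r = (a + 1) / (cmod c)\<^sup>2"
    define t where "t = - complex_of_real r * c"
    have "cnj t * c = - complex_of_real (r * (cmod c)\<^sup>2)"
      by (simp add: t_def mult.assoc cnj_mult_cmod_sq)
    also have "r * (cmod c)\<^sup>2 = a + 1" using \<open>c \<noteq> 0\<close> by (simp add: r_def)
    finally have "Re (cnj t * c) = - (a + 1)" by simp
    moreover have "0 \<le> a" using nonneg[of 0] by simp
    ultimately show False using nonneg[of t] True by simp
  qed
next
  case False
  with \<open>0 \<le> b\<close> have "0 < b" by simp
  have "0 \<le> a - 2 * ((cmod c)\<^sup>2 / b) + (cmod c)\<^sup>2 / b\<^sup>2 * b"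
    using nonneg[of "- c / complex_of_real b"]
    by (simp add: norm_divide power_divide cnj_mult_cmod_sq)
  also have "(cmod c)\<^sup>2 / b\<^sup>2 * b = (cmod c)\<^sup>2 / b"
    using \<open>0 < b\<close> by (simp add: power2_eq_square)
  finally show ?thesis using \<open>0 < b\<close> by (simp add: divide_le_eq mult.commute)
qed

(* Cauchy-Schwarz for the positive semidefinite Hermitian matrix u A + cnj u adjoint_mat A,
   whose form at (x, y) is the expression on the left. *)

lemma form_cauchy_schwarz:
  assumes nonneg: "\<And>v. 0 \<le> Re (u * form A v v)"
  shows "cmod (u * form A x y + cnj u * cnj (form A y x))
           \<le> 2 * sqrt (Re (u * form A x x) * Re (u * form A y y))"
proof -
  have "(cmod ((u * form A x y + cnj u * cnj (form A y x)) / 2))\<^sup>2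
           \<le> Re (u * form A x x) * Re (u * form A y y)"
  proof (rule cmod_sq_le_of_quadratic_nonneg)
    fix t
    have "u * form A (x + t *s y) (x + t *s y) = u * form A x x + cnj t * (u * form A x y)
       + t * (u * form A y x) + complex_of_real ((cmod t)\<^sup>2) * (u * form A y y)"
      by (subst form_add_scale_self) (simp add: algebra_simps)
    hence "Re (u * form A (x + t *s y) (x + t *s y)) = Re (u * form A x x)
       + Re (cnj t * (u * form A x y)) + Re (t * (u * form A y x)) + (cmod t)\<^sup>2 * Re (u * form A y y)"
      by simp
    moreover have "Re (cnj t * (cnj u * cnj (form A y x))) = Re (t * (u * form A y x))"
      by (metis cnj.sel(1) complex_cnj_mult)
    hence "2 * Re (cnj t * ((u * form A x y + cnj u * cnj (form A y x)) / 2))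
       = Re (cnj t * (u * form A x y)) + Re (t * (u * form A y x))"
      by (simp add: distrib_left)
    ultimately show "0 \<le> Re (u * form A x x)
       + 2 * Re (cnj t * ((u * form A x y + cnj u * cnj (form A y x)) / 2))
       + (cmod t)\<^sup>2 * Re (u * form A y y)"
      using nonneg[of "x + t *s y"] by linarith
  qed (use nonneg in auto)
  hence "cmod (u * form A x y + cnj u * cnj (form A y x)) / 2
           \<le> sqrt (Re (u * form A x x) * Re (u * form A y y))"
    by (intro real_le_rsqrt) (simp add: norm_divide)
  thus ?thesis by simp
qed

lemma cinner_cauchy_schwarz: "cmod (cinner x y) \<le> norm x * norm y"
proof -
  have "cmod (1 * form (mat 1) x y + cnj 1 * cnj (form (mat 1) y x))
          \<le> 2 * sqrt (Re (1 * form (mat 1) x x) * Re (1 * form (mat 1) y y))"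
    by (rule form_cauchy_schwarz) (simp add: cinner_self)
  thus ?thesis
    by (simp add: cinner_self real_sqrt_mult flip: cinner_commute)
qed

lemma form_nonneg_of_unit:
  assumes "\<And>v. norm v = 1 \<Longrightarrow> 0 \<le> Re (u * form A v v)"
  shows "0 \<le> Re (u * form A v v)"
proof (cases "v = 0")
  case False
  let ?w = "complex_of_real (1 / norm v) *s v"
  have "0 \<le> Re (u * form A ?w ?w)" using assms norm_normalize[OF False] by blast
  also have "u * form A ?w ?w = complex_of_real ((1 / norm v)\<^sup>2) * (u * form A v v)"
    by (simp add: form_scale_self mult_ac norm_divide)
  finally show ?thesis using False by (simp add: zero_le_mult_iff)
qed simp

lemma sqrt_mult_add_le:
  fixes a1 b1 a2 b2 :: real
  assumes "0 \<le> a1" "0 \<le> b1" "0 \<le> a2" "0 \<le> b2"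
  shows "sqrt (a1 * b1) + sqrt (a2 * b2) \<le> sqrt ((a1 + a2) * (b1 + b2))"
proof (rule real_le_rsqrt)
  have "sqrt (a1 * b1) * sqrt (a2 * b2) = sqrt ((a1 * b2) * (a2 * b1))"
    by (simp add: real_sqrt_mult[symmetric] mult_ac)
  also have "\<dots> \<le> (a1 * b2 + a2 * b1) / 2"
    using assms by (intro arith_geo_mean_sqrt) auto
  finally show "(sqrt (a1 * b1) + sqrt (a2 * b2))\<^sup>2 \<le> (a1 + a2) * (b1 + b2)"
    using assms by (simp add: power2_eq_square algebra_simps)
qed

lemma sqrt_Re_mult_le: "sqrt (Re (u * a) * Re (u * b)) \<le> cmod u * sqrt (cmod a * cmod b)"
proof -
  have "Re (u * a) * Re (u * b) \<le> \<bar>Re (u * a)\<bar> * \<bar>Re (u * b)\<bar>"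
    by (simp flip: abs_mult)
  also have "\<dots> \<le> cmod (u * a) * cmod (u * b)"
    by (intro mult_mono abs_Re_le_cmod) auto
  finally have "Re (u * a) * Re (u * b) \<le> cmod (u * a) * cmod (u * b)" .
  hence "sqrt (Re (u * a) * Re (u * b)) \<le> sqrt ((cmod u)\<^sup>2 * (cmod a * cmod b))"
    by (simp add: norm_mult power2_eq_square mult_ac)
  thus ?thesis by (simp add: real_sqrt_mult)
qed

lemma form_bound_hermitian:
  assumes real: "\<And>v. Im (form A v v) = 0" and nonneg: "\<And>v. 0 \<le> Re (form A v v)"
  shows "cmod (form A x y) \<le> sqrt (cmod (form A x x) * cmod (form A y y))"
proof -
  have "cmod (\<i> * form A x y + cnj \<i> * cnj (form A y x))
          \<le> 2 * sqrt (Re (\<i> * form A x x) * Re (\<i> * form A y y))"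
    by (rule form_cauchy_schwarz) (simp add: real)
  hence "cnj (form A y x) = form A x y" using real by (simp add: algebra_simps)
  moreover have "cmod (1 * form A x y + cnj 1 * cnj (form A y x))
          \<le> 2 * sqrt (Re (1 * form A x x) * Re (1 * form A y y))"
    by (rule form_cauchy_schwarz) (simp add: nonneg)
  ultimately have "cmod (form A x y) \<le> sqrt (Re (form A x x) * Re (form A y y))"
    by (simp add: norm_mult)
  also have "\<dots> \<le> sqrt (cmod (form A x x) * cmod (form A y y))"
    using nonneg by (intro real_sqrt_le_mono mult_mono) (auto simp: complex_Re_le_cmod)
  finally show ?thesis .
qed

lemma form_bound_two_half_planes:
  assumes norm_eq: "cmod u1 = cmod u2"
    and nonneg1: "\<And>v. 0 \<le> Re (u1 * form A v v)" and nonneg2: "\<And>v. 0 \<le> Re (u2 * form A v v)"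
  shows "\<bar>Im (cnj u2 * u1)\<bar> * cmod (form A x y)
           \<le> cmod u1 * cmod (u1 + u2) * sqrt (cmod (form A x x) * cmod (form A y y))"
proof -
  define X1 where "X1 = u1 * form A x y + cnj u1 * cnj (form A y x)"
  define X2 where "X2 = u2 * form A x y + cnj u2 * cnj (form A y x)"
  define a1 b1 a2 b2
    where "a1 = Re (u1 * form A x x)" and "b1 = Re (u1 * form A y y)"
      and "a2 = Re (u2 * form A x x)" and "b2 = Re (u2 * form A y y)"
  have nn: "0 \<le> a1" "0 \<le> b1" "0 \<le> a2" "0 \<le> b2"
    using nonneg1 nonneg2 by (simp_all add: a1_def b1_def a2_def b2_def)
  define w where "w = Im (cnj u2 * u1)"
  have "cnj u2 * X1 - cnj u1 * X2 = complex_of_real (2 * w) * \<i> * form A x y"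
    by (simp add: X1_def X2_def w_def algebra_simps complex_eq_iff)
  hence "2 * \<bar>w\<bar> * cmod (form A x y) = cmod (cnj u2 * X1 - cnj u1 * X2)"
    by (simp add: norm_mult)
  also have "\<dots> \<le> cmod u1 * (cmod X1 + cmod X2)"
    using norm_triangle_ineq4[of "cnj u2 * X1" "cnj u1 * X2"] norm_eq by (simp add: norm_mult algebra_simps)
  also have "\<dots> \<le> cmod u1 * (2 * (sqrt (a1 * b1) + sqrt (a2 * b2)))"
    using form_cauchy_schwarz[OF nonneg1, of x y] form_cauchy_schwarz[OF nonneg2, of x y]
    by (intro mult_left_mono) (simp_all add: X1_def X2_def a1_def b1_def a2_def b2_def)
  also have "\<dots> \<le> cmod u1 * (2 * sqrt ((a1 + a2) * (b1 + b2)))"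
    using sqrt_mult_add_le[OF nn] by (intro mult_left_mono) auto
  also have "(a1 + a2) * (b1 + b2) = Re ((u1 + u2) * form A x x) * Re ((u1 + u2) * form A y y)"
    by (simp add: a1_def b1_def a2_def b2_def distrib_right)
  also have "cmod u1 * (2 * sqrt (Re ((u1 + u2) * form A x x) * Re ((u1 + u2) * form A y y)))
      \<le> cmod u1 * (2 * (cmod (u1 + u2) * sqrt (cmod (form A x x) * cmod (form A y y))))"
    using sqrt_Re_mult_le[of "u1 + u2" "form A x x" "form A y y"] by (intro mult_left_mono) auto
  finally show ?thesis by (simp add: w_def mult_ac)
qed

section \<open>Sectorial and accretive-dissipative matrices\<close>

lemma sectorial_form:
  assumes "sectorial \<alpha> A" and "norm v = 1"
  shows "0 < Re (form A v v) \<and> \<bar>Im (form A v v)\<bar> \<le> tan \<alpha> * Re (form A v v)"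
proof -
  have "form A v v \<in> num_range A" using assms(2) unfolding num_range_def by blast
  thus ?thesis using assms(1) unfolding sectorial_def sector_def by blast
qed

lemma sectorial_half_planes:
  assumes sect: "sectorial \<alpha> A" and "0 < cos \<alpha>"
  shows "0 \<le> Re (Complex (sin \<alpha>) (- cos \<alpha>) * form A v v)"
    and "0 \<le> Re (Complex (sin \<alpha>) (cos \<alpha>) * form A v v)"
proof -
  have cone: "\<bar>cos \<alpha> * Im (form A w w)\<bar> \<le> sin \<alpha> * Re (form A w w)" if "norm w = 1" for w
  proof -
    have "cos \<alpha> * \<bar>Im (form A w w)\<bar> \<le> cos \<alpha> * (tan \<alpha> * Re (form A w w))"
      using sectorial_form[OF sect that] \<open>0 < cos \<alpha>\<close> by (intro mult_left_mono) auto
    thus ?thesis using \<open>0 < cos \<alpha>\<close> by (simp add: tan_def abs_mult)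
  qed
  have "0 \<le> Re (Complex (sin \<alpha>) (- cos \<alpha>) * form A w w)
           \<and> 0 \<le> Re (Complex (sin \<alpha>) (cos \<alpha>) * form A w w)" if "norm w = 1" for w
    using cone[OF that] by (simp add: abs_le_iff)
  thus "0 \<le> Re (Complex (sin \<alpha>) (- cos \<alpha>) * form A v v)"
    and "0 \<le> Re (Complex (sin \<alpha>) (cos \<alpha>) * form A v v)"
    by (blast intro: form_nonneg_of_unit)+
qed

lemma sectorial_form_bound:
  assumes "0 \<le> \<alpha>" and "\<alpha> < pi / 2" and sect: "sectorial \<alpha> A"
  shows "cos \<alpha> * cmod (form A x y) \<le> sqrt (cmod (form A x x) * cmod (form A y y))"
proof (cases "\<alpha> = 0")
  case True
  have on_sphere: "Re (form A w w) \<ge> 0 \<and> Im (form A w w) = 0" if "norm w = 1" for w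
    using sectorial_form[OF sect that] True by simp
  have half_plane: "0 \<le> Re (u * form A v v)" if "u = 1 \<or> u = \<i> \<or> u = -\<i>" for u v
    by (rule form_nonneg_of_unit) (use that on_sphere in auto)
  have "Im (form A v v) = 0 \<and> 0 \<le> Re (form A v v)" for v
    using half_plane[of 1 v] half_plane[of \<i> v] half_plane[of "-\<i>" v] by simp
  hence "cmod (form A x y) \<le> sqrt (cmod (form A x x) * cmod (form A y y))"
    by (intro form_bound_hermitian) auto
  thus ?thesis using True by simp
next
  case False
  with assms have "0 < cos \<alpha>" and "0 < sin \<alpha>"
    by (auto intro: cos_gt_zero_pi sin_gt_zero)
  define u1 u2 where "u1 = Complex (sin \<alpha>) (- cos \<alpha>)" and "u2 = Complex (sin \<alpha>) (cos \<alpha>)"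
  have "\<bar>Im (cnj u2 * u1)\<bar> * cmod (form A x y)
           \<le> cmod u1 * cmod (u1 + u2) * sqrt (cmod (form A x x) * cmod (form A y y))"
    using sectorial_half_planes[OF sect \<open>0 < cos \<alpha>\<close>]
    by (intro form_bound_two_half_planes) (simp_all add: u1_def u2_def cmod_def)
  moreover have "\<bar>Im (cnj u2 * u1)\<bar> = 2 * sin \<alpha> * cos \<alpha>" and "cmod u1 = 1"
    using \<open>0 < cos \<alpha>\<close> \<open>0 < sin \<alpha>\<close> by (simp_all add: u1_def u2_def cmod_def)
  moreover have "u1 + u2 = complex_of_real (2 * sin \<alpha>)"
    by (simp add: u1_def u2_def complex_eq_iff)
  ultimately show ?thesis using \<open>0 < sin \<alpha>\<close> by (simp add: mult_ac)
qed

lemma form_real_part_mat: "form (real_part_mat A) x x = complex_of_real (Re (form A x x))"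
proof -
  have "real_part_mat A *v x = (1 / 2) *s (A *v x + adjoint_mat A *v x)"
    by (simp add: vec_eq_iff real_part_mat_def matrix_vector_mult_def sum_distrib_left
        sum.distrib[symmetric] algebra_simps add_divide_distrib)
  thus ?thesis
    by (simp add: cinner_scale_left cinner_add_left form_adjoint_mat_self complex_eq_iff)
qed

lemma form_imag_part_mat: "form (imag_part_mat A) x x = complex_of_real (Im (form A x x))"
proof -
  have "imag_part_mat A *v x = (1 / (2 * \<i>)) *s (A *v x - adjoint_mat A *v x)"
    by (simp add: vec_eq_iff imag_part_mat_def matrix_vector_mult_def sum_distrib_left
        sum_subtractf[symmetric] algebra_simps diff_divide_distrib)
  thus ?thesis
    by (simp add: cinner_scale_left cinner_diff_left form_adjoint_mat_self complex_eq_iff)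
qed

lemma pos_def_form_nonneg: "pos_def H \<Longrightarrow> 0 \<le> Re (form H v v)"
  by (cases "v = 0") (auto simp: pos_def_def less_imp_le)

lemma accretive_dissipative_form:
  assumes "accretive_dissipative A"
  shows "0 \<le> Re (form A v v)" and "0 \<le> Im (form A v v)"
proof -
  have "0 \<le> Re (form (real_part_mat A) v v)" and "0 \<le> Re (form (imag_part_mat A) v v)"
    using assms pos_def_form_nonneg unfolding accretive_dissipative_def by blast+
  thus "0 \<le> Re (form A v v)" and "0 \<le> Im (form A v v)"
    by (simp_all add: form_real_part_mat form_imag_part_mat)
qed

lemma accretive_dissipative_form_bound:
  assumes "accretive_dissipative A"
  shows "1 / sqrt 2 * cmod (form A x y) \<le> sqrt (cmod (form A x x) * cmod (form A y y))"
proof -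
  have "\<bar>Im (cnj (- \<i>) * 1)\<bar> * cmod (form A x y)
          \<le> cmod 1 * cmod (1 + - \<i>) * sqrt (cmod (form A x x) * cmod (form A y y))"
    using accretive_dissipative_form[OF assms] by (intro form_bound_two_half_planes) auto
  moreover have "cmod (1 + - \<i>) = sqrt 2" by (simp add: cmod_def)
  ultimately show ?thesis by (simp add: divide_le_eq mult.commute)
qed

section \<open>Matrices A with A and A ** A accretive\<close>

lemma form_attains_min_on_sphere:
  fixes A :: "complex^'n^'n"
  obtains x where "norm x = 1" and "\<And>y. norm y = 1 \<Longrightarrow> Re (u * form A x x) \<le> Re (u * form A y y)"
proof -
  have "continuous_on (sphere 0 1) (\<lambda>v. A *v v)"
    by (intro linear_continuous_on matrix_vector_mul_bounded_linear)
  hence "continuous_on (sphere 0 1) (\<lambda>v. Re (u * form A v v))"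
    unfolding cinner_def by (intro continuous_intros continuous_on_component)
  moreover have "sphere (0 :: complex^'n) 1 \<noteq> {}"
    using norm_axis_complex_1 by (metis mem_sphere_0 empty_iff)
  ultimately obtain x where "x \<in> sphere 0 1" and "\<forall>y \<in> sphere 0 1. Re (u * form A x x) \<le> Re (u * form A y y)"
    using continuous_attains_inf[OF compact_sphere] by blast
  thus ?thesis using that by simp
qed

lemma form_null_vector:
  assumes nonneg: "\<And>v. 0 \<le> Re (u * form A v v)" and null: "Re (u * form A x x) = 0"
  shows "u *s (A *v x) + cnj u *s (adjoint_mat A *v x) = 0"
proof -
  define w where "w = u *s (A *v x) + cnj u *s (adjoint_mat A *v x)"
  have "cinner w y = u * form A x y + cnj u * cnj (form A y x)" for y
    using cinner_adjoint_mat[of "adjoint_mat A" x y]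
    by (simp add: w_def cinner_add_left cinner_scale_left flip: cinner_commute)
  moreover have "u * form A x y + cnj u * cnj (form A y x) = 0" for y
    using form_cauchy_schwarz[OF nonneg, of x y] null by simp
  ultimately have "cinner w w = 0" by simp
  thus ?thesis by (simp add: cinner_self_eq_0_iff w_def)
qed

(* Lagrange condition: shifting A by (mu / u) I makes the minimum 0, so that x becomes a null
   vector of the shifted form. *)

lemma form_minimiser_equation:
  fixes A :: "complex^'n^'n"
  assumes "u \<noteq> 0" and "norm x = 1"
    and min: "\<And>y. norm y = 1 \<Longrightarrow> Re (u * form A x x) \<le> Re (u * form A y y)"
  shows "u *s (A *v x) + cnj u *s (adjoint_mat A *v x) = complex_of_real (2 * Re (u * form A x x)) *s x"
proof -
  define \<mu> where "\<mu> = Re (u * form A x x)"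
  define c where "c = complex_of_real \<mu> / u"
  have uc: "u * c = complex_of_real \<mu>"
    using \<open>u \<noteq> 0\<close> by (simp add: c_def)
  hence cnj_uc: "cnj u * cnj c = complex_of_real \<mu>"
    by (metis complex_cnj_mult complex_cnj_complex_of_real)
  define B where "B = A - mat c"
  have shift: "u * form B v v = u * form A v v - complex_of_real \<mu>" if "norm v = 1" for v
    using that uc
    by (simp add: B_def matrix_vector_mult_diff_rdistrib mat_matrix_vector_mult cinner_diff_left
        cinner_scale_left norm_eq_1_iff_cinner_self right_diff_distrib mult.assoc[symmetric])
  have "0 \<le> Re (u * form B v v)" for v
  proof (rule form_nonneg_of_unit)
    fix w :: "complex^'n" assume "norm w = 1"
    thus "0 \<le> Re (u * form B w w)" using shift[of w] min[of w] by (simp add: \<mu>_def)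
  qed
  moreover have "Re (u * form B x x) = 0"
    using shift[OF \<open>norm x = 1\<close>] by (simp add: \<mu>_def)
  ultimately have "u *s (B *v x) + cnj u *s (adjoint_mat B *v x) = 0"
    by (rule form_null_vector)
  moreover have "adjoint_mat B = adjoint_mat A - mat (cnj c)"
    by (simp add: B_def adjoint_mat_def mat_def vec_eq_iff)
  hence "u *s (B *v x) + cnj u *s (adjoint_mat B *v x)
      = u *s (A *v x) + cnj u *s (adjoint_mat A *v x) - (u * c + cnj u * cnj c) *s x"
    by (simp add: B_def matrix_vector_mult_diff_rdistrib mat_matrix_vector_mult vector_ssub_ldistrib
        vector_smult_assoc vector_sadd_rdistrib)
  ultimately show ?thesis
    using uc cnj_uc by (simp add: \<mu>_def)
qed

lemma form_square_of_lagrange: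
  fixes \<epsilon> \<mu> :: real
  assumes \<epsilon>: "\<epsilon> = 1 \<or> \<epsilon> = -1"
    and lagrange: "Complex 1 (- \<epsilon>) *s (A *v x) + cnj (Complex 1 (- \<epsilon>)) *s (adjoint_mat A *v x)
                     = complex_of_real (2 * \<mu>) *s x"
  shows "Re (form (A ** A) x x) = \<mu> * (Re (form A x x) - \<epsilon> * Im (form A x x))"
proof -
  define u where "u = Complex 1 (- \<epsilon>)"
  define p \<sigma> N where "p = form (A ** A) x x" and "\<sigma> = form A x x" and "N = (norm (A *v x))\<^sup>2"
  have "u * p = cinner (A *v x) (cnj u *s (adjoint_mat A *v x))"
    by (simp add: p_def cinner_scale_right cinner_adjoint_mat flip: matrix_vector_mul_assoc)
  also have "cnj u *s (adjoint_mat A *v x) = complex_of_real (2 * \<mu>) *s x - u *s (A *v x)"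
    using lagrange by (simp add: u_def eq_diff_eq add.commute)
  finally have "u * p = complex_of_real (2 * \<mu>) * \<sigma> - cnj u * complex_of_real N"
    by (simp add: cinner_diff_right cinner_scale_right cinner_self \<sigma>_def N_def)
  hence "Re p + \<epsilon> * Im p = 2 * \<mu> * Re \<sigma> - N" and "Im p - \<epsilon> * Re p = 2 * \<mu> * Im \<sigma> - \<epsilon> * N"
    by (simp_all add: u_def complex_eq_iff)
  thus ?thesis using \<epsilon> by (auto simp: p_def \<sigma>_def algebra_simps)
qed

(* The minimum of Re (u * form A v v) over the unit sphere, u = 1 - \<i> \<epsilon>, cannot be negative:
   at a minimiser the Lagrange condition would force Re (form (A ** A) x x) < 0. *)

lemma accretive_square_half_plane:
  fixes A :: "complex^'n^'n" and \<epsilon> :: real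
  assumes \<epsilon>: "\<epsilon> = 1 \<or> \<epsilon> = -1"
    and acc: "\<And>v. norm v = 1 \<Longrightarrow> 0 < Re (form A v v)"
    and acc2: "\<And>v. norm v = 1 \<Longrightarrow> 0 < Re (form (A ** A) v v)"
  shows "0 \<le> Re (form A v v) + \<epsilon> * Im (form A v v)"
proof -
  define u where "u = Complex 1 (- \<epsilon>)"
  have Re_u: "Re (u * z) = Re z + \<epsilon> * Im z" for z by (simp add: u_def)
  obtain x where x_unit: "norm x = 1"
    and x_min: "\<And>y. norm y = 1 \<Longrightarrow> Re (u * form A x x) \<le> Re (u * form A y y)"
    using form_attains_min_on_sphere[of u A] by blast
  define \<mu> \<sigma> where "\<mu> = Re (u * form A x x)" and "\<sigma> = form A x x"
  have "0 \<le> \<mu>"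
  proof (rule ccontr)
    assume "\<not> 0 \<le> \<mu>"
    have "u \<noteq> 0" by (simp add: u_def complex_eq_iff)
    hence "u *s (A *v x) + cnj u *s (adjoint_mat A *v x) = complex_of_real (2 * \<mu>) *s x"
      using x_unit x_min unfolding \<mu>_def by (rule form_minimiser_equation)
    hence "Re (form (A ** A) x x) = \<mu> * (Re \<sigma> - \<epsilon> * Im \<sigma>)"
      unfolding \<sigma>_def by (intro form_square_of_lagrange[OF \<epsilon>]) (simp add: u_def)
    moreover have "0 < Re \<sigma> - \<epsilon> * Im \<sigma>"
      using acc[OF x_unit] Re_u[of \<sigma>] \<open>\<not> 0 \<le> \<mu>\<close> unfolding \<mu>_def \<sigma>_def by linarith
    ultimately have "Re (form (A ** A) x x) < 0"
      using \<open>\<not> 0 \<le> \<mu>\<close> by (simp add: mult_neg_pos)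
    thus False using acc2[OF x_unit] by simp
  qed
  have "0 \<le> Re (u * form A v v)"
  proof (rule form_nonneg_of_unit)
    fix w :: "complex^'n" assume "norm w = 1"
    from x_min[OF this] \<open>0 \<le> \<mu>\<close> show "0 \<le> Re (u * form A w w)" by (simp add: \<mu>_def)
  qed
  thus ?thesis by (simp only: Re_u)
qed

lemma accretive_square_form_bound:
  fixes A :: "complex^'n^'n"
  assumes acc: "\<And>v. norm v = 1 \<Longrightarrow> 0 < Re (form A v v)"
    and acc2: "\<And>v. norm v = 1 \<Longrightarrow> 0 < Re (form (A ** A) v v)"
  shows "1 / sqrt 2 * cmod (form A x y) \<le> sqrt (cmod (form A x x) * cmod (form A y y))"
proof -
  define u1 u2 where "u1 = Complex 1 (- 1)" and "u2 = Complex 1 1"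
  have "0 \<le> Re (u1 * form A v v)" and "0 \<le> Re (u2 * form A v v)" for v
    using accretive_square_half_plane[OF _ acc acc2, of 1 v] accretive_square_half_plane[OF _ acc acc2, of "-1" v]
    by (simp_all add: u1_def u2_def)
  hence "\<bar>Im (cnj u2 * u1)\<bar> * cmod (form A x y)
           \<le> cmod u1 * cmod (u1 + u2) * sqrt (cmod (form A x x) * cmod (form A y y))"
    by (intro form_bound_two_half_planes) (simp_all add: u1_def u2_def cmod_def)
  moreover have "\<bar>Im (cnj u2 * u1)\<bar> = 2" and "cmod u1 = sqrt 2" and "u1 + u2 = 2"
    by (simp_all add: u1_def u2_def cmod_def complex_eq_iff)
  ultimately show ?thesis by (simp add: divide_le_eq mult.commute)
qed

section \<open>The q-numerical radius\<close>

lemma exists_unit_orthogonal: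
  fixes v :: "complex^'n"
  assumes "CARD('n) \<ge> 2"
  obtains z where "norm z = 1" and "cinner v z = 0"
proof -
  obtain i j :: 'n where "i \<noteq> j"
    using assms card_le_Suc0_iff_eq[of "UNIV :: 'n set"] by force
  define z where "z = cnj (v $ j) *s axis i 1 - cnj (v $ i) *s axis j 1"
  have "cinner v z = 0"
    by (simp add: z_def cinner_diff_right cinner_scale_right cinner_axis mult.commute)
  show ?thesis
  proof (cases "z = 0")
    case False
    with \<open>cinner v z = 0\<close> show ?thesis
      using that[OF norm_normalize[OF False]] by (simp add: cinner_scale_right)
  next
    case True
    hence "z $ j = 0" by simp
    hence "v $ i = 0" using \<open>i \<noteq> j\<close> by (simp add: z_def axis_def)
    thus ?thesis using that[of "axis i 1"] by (simp add: cinner_axis)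
  qed
qed

(* Without the last hypothesis this fails: for n = 1 and cmod q < 1 the set W_q(A) is empty. *)

lemma unit_pair_with_cinner_q:
  fixes v :: "complex^'n"
  assumes "norm v = 1" and "cmod q \<le> 1" and "cmod q = 1 \<or> CARD('n) \<ge> 2"
  obtains y1 y2 where "norm y1 = 1" "norm y2 = 1" "cinner v y1 = q" "cinner v y2 = q"
    and "y1 + y2 = (2 * cnj q) *s v"
proof (cases "cmod q = 1")
  case True
  have "norm (cnj q *s v) = 1" and "cinner v (cnj q *s v) = q"
    using True assms(1) by (simp_all add: norm_vector_scalar_mult cinner_scale_right
        norm_eq_1_iff_cinner_self[symmetric])
  thus ?thesis using that[of "cnj q *s v" "cnj q *s v"] by (simp add: vector_sadd_rdistrib[symmetric])
next
  case False
  with assms obtain z :: "complex^'n" where "norm z = 1" and "cinner v z = 0"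
    using exists_unit_orthogonal by auto
  define r where "r = complex_of_real (sqrt (1 - (cmod q)\<^sup>2))"
  have "(cmod q)\<^sup>2 \<le> 1" using assms(2) by (simp add: power_le_one)
  hence r_sq: "r * cnj r = 1 - q * cnj q"
    by (simp add: r_def mult_cnj_cmod_sq flip: of_real_mult)
  have "cinner (cnj q *s v + s *s z) (cnj q *s v + s *s z) = q * cnj q + s * cnj s" for s
    using \<open>norm v = 1\<close> \<open>norm z = 1\<close> \<open>cinner v z = 0\<close> cinner_commute[of z v]
    by (simp add: cinner_add_left cinner_add_right cinner_scale_left cinner_scale_right
        norm_eq_1_iff_cinner_self)
  hence unit: "norm (cnj q *s v + s *s z) = 1" if "s = r \<or> s = - r" for s
    using that r_sq by (auto simp: norm_eq_1_iff_cinner_self)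
  have inner: "cinner v (cnj q *s v + s *s z) = q" for s
    using \<open>norm v = 1\<close> \<open>cinner v z = 0\<close>
    by (simp add: cinner_add_right cinner_scale_right norm_eq_1_iff_cinner_self)
  have "(cnj q *s v + r *s z) + (cnj q *s v + (- r) *s z) = (2 * cnj q) *s v"
    by (simp add: vec_eq_iff algebra_simps)
  thus ?thesis using that unit inner by blast
qed

lemma form_in_q_num_range:
  "norm x = 1 \<Longrightarrow> norm y = 1 \<Longrightarrow> cinner x y = q \<Longrightarrow> form A x y \<in> q_num_range q A"
  unfolding q_num_range_def by blast

lemma q_num_range_nonempty:
  fixes A :: "complex^'n^'n"
  assumes "cmod q \<le> 1" and "cmod q = 1 \<or> CARD('n) \<ge> 2"
  shows "q_num_range q A \<noteq> {}"
proof -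
  fix i :: 'n
  obtain y where "norm y = 1" and "cinner (axis i 1) y = q"
    using unit_pair_with_cinner_q[OF norm_axis_complex_1 assms] by metis
  thus ?thesis using form_in_q_num_range[OF norm_axis_complex_1] by blast
qed

lemma cmod_le_op_norm_of_q_num_range:
  assumes "z \<in> q_num_range q A"
  shows "cmod z \<le> op_norm A"
proof -
  obtain x y where "norm x = 1" "norm y = 1" "z = form A x y"
    using assms unfolding q_num_range_def by blast
  hence "cmod z \<le> norm (A *v x)"
    using cinner_cauchy_schwarz[of "A *v x" y] by simp
  also have "\<dots> \<le> op_norm A"
    using onorm[OF matrix_vector_mul_bounded_linear, of A x] \<open>norm x = 1\<close> by (simp add: op_norm_def)
  finally show ?thesis .
qed

lemma q_num_radius_le_op_norm:
  fixes A :: "complex^'n^'n"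
  assumes "cmod q \<le> 1" and "cmod q = 1 \<or> CARD('n) \<ge> 2"
  shows "q_num_radius q A \<le> op_norm A"
  unfolding q_num_radius_def using q_num_range_nonempty[OF assms] cmod_le_op_norm_of_q_num_range
  by (intro cSup_least) auto

lemma cmod_le_q_num_radius: "z \<in> q_num_range q A \<Longrightarrow> cmod z \<le> q_num_radius q A"
  unfolding q_num_radius_def
  by (intro cSup_upper bdd_aboveI2[OF cmod_le_op_norm_of_q_num_range]) auto

lemma cmod_q_form_le_q_num_radius:
  fixes A :: "complex^'n^'n"
  assumes "cmod q \<le> 1" and "cmod q = 1 \<or> CARD('n) \<ge> 2" and "norm v = 1"
  shows "cmod q * cmod (form A v v) \<le> q_num_radius q A"
proof -
  obtain y1 y2 where y: "norm y1 = 1" "norm y2 = 1" "cinner v y1 = q" "cinner v y2 = q"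
    and sum: "y1 + y2 = (2 * cnj q) *s v"
    using unit_pair_with_cinner_q[OF assms(3,1,2)] by metis
  have "2 * (cmod q * cmod (form A v v)) = cmod (form A v y1 + form A v y2)"
    by (simp add: sum flip: cinner_add_right) (simp add: cinner_scale_right norm_mult)
  also have "\<dots> \<le> cmod (form A v y1) + cmod (form A v y2)"
    by (rule norm_triangle_ineq)
  also have "\<dots> \<le> 2 * q_num_radius q A"
    using y by (smt (verit) \<open>norm v = 1\<close> cmod_le_q_num_radius form_in_q_num_range)
  finally show ?thesis by simp
qed

lemma op_norm_le_of_form_bound:
  fixes A :: "complex^'n^'n"
  assumes bound: "\<And>x y. norm x = 1 \<Longrightarrow> norm y = 1 \<Longrightarrow> cmod (form A x y) \<le> K" and "0 \<le> K"
  shows "op_norm A \<le> K"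
  unfolding op_norm_def
proof (rule onorm_le)
  fix x :: "complex^'n"
  show "norm (A *v x) \<le> K * norm x"
  proof (cases "A *v x = 0")
    case True thus ?thesis using \<open>0 \<le> K\<close> by simp
  next
    case False
    hence "x \<noteq> 0" by auto
    define x' where "x' = complex_of_real (1 / norm x) *s x"
    have "A *v x' = complex_of_real (1 / norm x) *s (A *v x)" by (simp add: x'_def vec.scale)
    hence norm_Ax': "norm (A *v x') = norm (A *v x) / norm x"
      by (simp add: norm_vector_scalar_mult norm_divide)
    hence "A *v x' \<noteq> 0" using False \<open>x \<noteq> 0\<close> by auto
    define y where "y = complex_of_real (1 / norm (A *v x')) *s (A *v x')"
    have "norm x' = 1" unfolding x'_def using \<open>x \<noteq> 0\<close> by (rule norm_normalize)
    moreover have "norm y = 1" unfolding y_def using \<open>A *v x' \<noteq> 0\<close> by (rule norm_normalize)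
    moreover have "form A x' y = complex_of_real (norm (A *v x'))"
      using \<open>A *v x' \<noteq> 0\<close> by (simp add: y_def cinner_scale_right cinner_self power2_eq_square)
    ultimately have "norm (A *v x') \<le> K"
      using bound[of x' y] by simp
    thus ?thesis using norm_Ax' \<open>x \<noteq> 0\<close> by (simp add: divide_le_eq)
  qed
qed

lemma q_num_radius_lower_bound:
  fixes A :: "complex^'n^'n"
  assumes "0 < cmod q" and "cmod q \<le> 1" and "cmod q = 1 \<or> CARD('n) \<ge> 2" and "0 < c"
    and bound: "\<And>x y. norm x = 1 \<Longrightarrow> norm y = 1 \<Longrightarrow>
                   c * cmod (form A x y) \<le> sqrt (cmod (form A x x) * cmod (form A y y))"
  shows "cmod q * c * op_norm A \<le> q_num_radius q A"
proof -
  let ?w = "q_num_radius q A"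
  have diag: "cmod q * cmod (form A v v) \<le> ?w" if "norm v = 1" for v
    using cmod_q_form_le_q_num_radius[OF assms(2,3) that] .
  hence "0 \<le> ?w"
    using \<open>0 < cmod q\<close> by (meson norm_axis_complex_1 mult_nonneg_nonneg norm_ge_zero order_trans)
  have "op_norm A \<le> ?w / (cmod q * c)"
  proof (rule op_norm_le_of_form_bound)
    fix x y :: "complex^'n" assume "norm x = 1" and "norm y = 1"
    have "cmod q * (c * cmod (form A x y)) \<le> cmod q * sqrt (cmod (form A x x) * cmod (form A y y))"
      using bound[OF \<open>norm x = 1\<close> \<open>norm y = 1\<close>] \<open>0 < cmod q\<close> by simp
    also have "\<dots> = sqrt ((cmod q * cmod (form A x x)) * (cmod q * cmod (form A y y)))"
      using \<open>0 < cmod q\<close> by (simp add: real_sqrt_mult mult_ac)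
    also have "\<dots> \<le> sqrt (?w * ?w)"
      using diag[OF \<open>norm x = 1\<close>] diag[OF \<open>norm y = 1\<close>] \<open>0 \<le> ?w\<close>
      by (intro real_sqrt_le_mono mult_mono) auto
    also have "\<dots> = ?w" using \<open>0 \<le> ?w\<close> by simp
    finally show "cmod (form A x y) \<le> ?w / (cmod q * c)"
      using \<open>0 < cmod q\<close> \<open>0 < c\<close> by (simp add: le_divide_eq mult_ac)
  qed (use \<open>0 \<le> ?w\<close> \<open>0 < cmod q\<close> \<open>0 < c\<close> in simp)
  thus ?thesis using \<open>0 < cmod q\<close> \<open>0 < c\<close> by (simp add: le_divide_eq mult_ac)
qed

theorem theorem2p10:
  fixes q :: complex and A :: "complex ^'n ^'n"
  assumes "0 < cmod q" and "cmod q \<le> 1"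
    and "cmod q = 1 \<or> CARD('n) \<ge> 2"
  shows "(\<forall>\<alpha>. 0 \<le> \<alpha> \<and> \<alpha> < pi / 2 \<and> sectorial \<alpha> A \<longrightarrow>
            cmod q * cos \<alpha> * op_norm A \<le> q_num_radius q A \<and> q_num_radius q A \<le> op_norm A)
       \<and> (((\<exists>\<alpha>. 0 \<le> \<alpha> \<and> \<alpha> < pi / 2 \<and> sectorial \<alpha> A \<and> sectorial \<alpha> (A ** A))
             \<or> accretive_dissipative A) \<longrightarrow>
            cmod q / sqrt 2 * op_norm A \<le> q_num_radius q A \<and> q_num_radius q A \<le> op_norm A)"
proof (intro conjI allI impI)
  fix \<alpha> assume "0 \<le> \<alpha> \<and> \<alpha> < pi / 2 \<and> sectorial \<alpha> A"
  moreover from this have "0 < cos \<alpha>" by (intro cos_gt_zero_pi) auto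
  ultimately show "cmod q * cos \<alpha> * op_norm A \<le> q_num_radius q A"
    by (intro q_num_radius_lower_bound[OF assms] sectorial_form_bound) auto
next
  assume "(\<exists>\<alpha>. 0 \<le> \<alpha> \<and> \<alpha> < pi / 2 \<and> sectorial \<alpha> A \<and> sectorial \<alpha> (A ** A))
          \<or> accretive_dissipative A"
  hence "1 / sqrt 2 * cmod (form A x y) \<le> sqrt (cmod (form A x x) * cmod (form A y y))" for x y
    using accretive_square_form_bound[of A] accretive_dissipative_form_bound sectorial_form by metis
  hence "cmod q * (1 / sqrt 2) * op_norm A \<le> q_num_radius q A"
    by (intro q_num_radius_lower_bound[OF assms]) auto
  thus "cmod q / sqrt 2 * op_norm A \<le> q_num_radius q A" by simp
qed (use q_num_radius_le_op_norm assms in blast)+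

end
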